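(* Let $X$ be a Hausdorff topological space. Then $X$ is totally disconnected and locally compact if and only if its symmetric pseudogroup $\mathscr{I}(X)$ is algebraic.
   Context: The symmetric pseudogroup $\mathscr{I}(X)$ is the set of all homeomorphisms $f:U\to V$ between open subsets $U=\mathrm{dom}(f)$ and $V$ of $X$, with product: for $f:U\to V$ and $f_1:U_1\to V_1$, $f_1\cdot f : x\mapsto f_1(f(x))$ defined on $f^{-1}(V\cap U_1)$ with values in $f_1(V\cap U_1)$; it is an inverse semigroup with $f^*=f^{-1}$. Its intrinsic order is $f\leqslant g$ iff $f=g|_U$ for some open $U\subseteq\mathrm{dom}(g)$. In a poset, $x$ is way-below $y$ ($x\ll y$) if for every directed subset $D$ (nonempty, any two elements having an upper bound in $D$) that has a supremum with $y\leqslant\sup D$, there is $d\in D$ with $x\leqslant d$. An element $k$ is compact if $k\ll k$; a poset is algebraic if every element is the supremum of the directed set of compact elements below it; $\mathscr{I}(X)$ is algebraic if it is so for its intrinsic order. *)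

theory Defs
  imports "HOL-Analysis.Analysis"
begin

definition totally_disconnected_space :: "'a topology \<Rightarrow> bool" where
  "totally_disconnected_space X \<longleftrightarrow>
     (\<forall>S. S \<subseteq> topspace X \<and> connectedin X S \<longrightarrow> (\<exists>a. S \<subseteq> {a}))"

definition sym_pseudogroup :: "'a topology \<Rightarrow> ('a \<rightharpoonup> 'a) set" where
  "sym_pseudogroup X = {f. openin X (dom f) \<and> openin X (ran f) \<and>
      homeomorphic_map (subtopology X (dom f)) (subtopology X (ran f)) (\<lambda>x. the (f x))}"

definition pg_le :: "('a \<rightharpoonup> 'a) \<Rightarrow> ('a \<rightharpoonup> 'a) \<Rightarrow> bool" where
  "pg_le f g \<longleftrightarrow> f \<subseteq>\<^sub>m g"

definition directed_in :: "'b set \<Rightarrow> ('b \<Rightarrow> 'b \<Rightarrow> bool) \<Rightarrow> 'b set \<Rightarrow> bool" where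
  "directed_in P le D \<longleftrightarrow> D \<subseteq> P \<and> D \<noteq> {} \<and>
     (\<forall>a\<in>D. \<forall>b\<in>D. \<exists>c\<in>D. le a c \<and> le b c)"

definition is_sup_in :: "'b set \<Rightarrow> ('b \<Rightarrow> 'b \<Rightarrow> bool) \<Rightarrow> 'b set \<Rightarrow> 'b \<Rightarrow> bool" where
  "is_sup_in P le D s \<longleftrightarrow> s \<in> P \<and> (\<forall>d\<in>D. le d s) \<and>
     (\<forall>u\<in>P. (\<forall>d\<in>D. le d u) \<longrightarrow> le s u)"

definition way_below_in :: "'b set \<Rightarrow> ('b \<Rightarrow> 'b \<Rightarrow> bool) \<Rightarrow> 'b \<Rightarrow> 'b \<Rightarrow> bool" where
  "way_below_in P le x y \<longleftrightarrow>
     (\<forall>D s. directed_in P le D \<and> is_sup_in P le D s \<and> le y s \<longrightarrow> (\<exists>d\<in>D. le x d))"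

definition compact_elem_in :: "'b set \<Rightarrow> ('b \<Rightarrow> 'b \<Rightarrow> bool) \<Rightarrow> 'b \<Rightarrow> bool" where
  "compact_elem_in P le k \<longleftrightarrow> way_below_in P le k k"

definition algebraic_in :: "'b set \<Rightarrow> ('b \<Rightarrow> 'b \<Rightarrow> bool) \<Rightarrow> bool" where
  "algebraic_in P le \<longleftrightarrow>
     (\<forall>x\<in>P. directed_in P le {k\<in>P. compact_elem_in P le k \<and> le k x} \<and>
             is_sup_in P le {k\<in>P. compact_elem_in P le k \<and> le k x} x)"

end

theory Submission
  imports Defs
begin

text \<open>Both sides are equivalent to X having a base of compact open sets. On the topological
  side this is Wilder's theorem that a compact component of a locally compact Hausdorff space
  has arbitrarily small clopen neighbourhoods. On the pseudogroup side, Hausdorffness forces the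
  supremum of a directed family to be defined only where some member is, so the compact elements
  are exactly the partial homeomorphisms with compact domain, and every f is the directed
  supremum of its restrictions to compact open subsets of its domain precisely when such subsets
  cover every open set.\<close>

lemma restrict_map_map_le: "f |` A \<subseteq>\<^sub>m f"
  by (auto simp: map_le_def)

lemma restrict_map_mono: "A \<subseteq> B \<Longrightarrow> f |` A \<subseteq>\<^sub>m f |` B"
  by (auto simp: map_le_def)

lemma map_le_iff_eq_restrict_map: "f \<subseteq>\<^sub>m g \<longleftrightarrow> f = g |` dom f"
  by (auto simp: map_le_def restrict_map_def fun_eq_iff)

lemma map_le_restrict_map: "f \<subseteq>\<^sub>m g \<Longrightarrow> dom f \<subseteq> A \<Longrightarrow> f \<subseteq>\<^sub>m g |` A"
  by (auto simp: map_le_def subsetD)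

lemma map_le_if_common_extension:
  "f \<subseteq>\<^sub>m h \<Longrightarrow> g \<subseteq>\<^sub>m h \<Longrightarrow> dom f \<subseteq> dom g \<Longrightarrow> f \<subseteq>\<^sub>m g"
  by (simp add: map_le_def subset_iff)

lemma map_le_if_locally_map_le:
  assumes "\<And>x. x \<in> dom f \<Longrightarrow> \<exists>V. x \<in> V \<and> f |` V \<subseteq>\<^sub>m g"
  shows "f \<subseteq>\<^sub>m g"
  unfolding map_le_def
proof
  fix x assume x: "x \<in> dom f"
  then obtain V where "x \<in> V" "f |` V \<subseteq>\<^sub>m g"
    using assms by blast
  then show "f x = g x"
    using x by (metis domIff restrict_in map_le_def)
qed

lemma directed_in_finite_upper_bound:
  assumes D: "directed_in P le D" and trans: "\<And>a b c. le a b \<Longrightarrow> le b c \<Longrightarrow> le a c"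
    and "finite F" and "F \<subseteq> D"
  shows "\<exists>c\<in>D. \<forall>d\<in>F. le d c"
  using \<open>finite F\<close> \<open>F \<subseteq> D\<close>
proof (induction F rule: finite_induct)
  case empty
  then show ?case
    using D by (auto simp: directed_in_def)
next
  case (insert a F)
  then obtain c where c: "c \<in> D" "\<forall>d\<in>F. le d c"
    by auto
  moreover obtain c' where "c' \<in> D" "le a c'" "le c c'"
    using D c insert.prems unfolding directed_in_def by blast
  ultimately show ?case
    using trans by blast
qed

lemma neighbourhood_base_of_compact_open:
  "neighbourhood_base_of (\<lambda>U. openin X U \<and> compactin X U) X \<longleftrightarrow>
    (\<forall>W x. openin X W \<and> x \<in> W \<longrightarrow> (\<exists>U. openin X U \<and> compactin X U \<and> x \<in> U \<and> U \<subseteq> W))"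
  by (simp add: open_neighbourhood_base_of)

text \<open>In a locally compact Hausdorff space a compact component has arbitrarily small clopen
  neighbourhoods (Wilder); when components are points, those inside a compact neighbourhood
  are compact open.\<close>

lemma compact_open_base_if_totally_disconnected_locally_compact:
  assumes Hs: "Hausdorff_space X" and td: "totally_disconnected_space X"
    and lc: "locally_compact_space X"
  shows "neighbourhood_base_of (\<lambda>U. openin X U \<and> compactin X U) X"
  unfolding neighbourhood_base_of_compact_open
proof (intro allI impI)
  fix W x assume "openin X W \<and> x \<in> W"
  then have W: "openin X W" and x: "x \<in> W" and x_X: "x \<in> topspace X"
    using openin_subset by auto
  obtain N K where NK: "openin X N" "compactin X K" "x \<in> N" "N \<subseteq> K"
    using lc x_X unfolding locally_compact_space_def by blast
  define C where "C = connected_component_of_set X x"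
  have "connectedin X C" "C \<subseteq> topspace X" "x \<in> C"
    using x_X by (auto simp: C_def connectedin_connected_component_of
        connected_component_of_subset_topspace connected_component_of_refl)
  then have C: "C = {x}"
    using td unfolding totally_disconnected_space_def by blast
  have "C \<in> connected_components_of X"
    using x_X by (simp add: C_def connected_component_in_connected_components_of)
  moreover have "compactin X C" "openin X (W \<inter> N)" "C \<subseteq> W \<inter> N"
    using C x x_X NK W by (auto simp: openin_Int)
  ultimately obtain U V where UV: "openin X U" "openin X V" "disjnt U V" "U \<union> V = topspace X"
      "C \<subseteq> U" "U \<subseteq> W \<inter> N"
    using wilder_locally_compact_component_thm[OF lc Hs] by metis
  then have "U = topspace X - V"
    by (auto simp: disjnt_def)
  then have "closedin X U"
    using UV(2) by (simp add: closedin_diff)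
  then have "compactin X U"
    using closed_compactin[OF NK(2)] UV NK by blast
  then show "\<exists>U. openin X U \<and> compactin X U \<and> x \<in> U \<and> U \<subseteq> W"
    using UV C by blast
qed

lemma locally_compact_if_compact_open_base:
  "neighbourhood_base_of (\<lambda>U. openin X U \<and> compactin X U) X \<Longrightarrow> locally_compact_space X"
  by (rule neighbourhood_base_imp_locally_compact_space) (erule neighbourhood_base_of_mono, simp)

text \<open>Two points of a connected set cannot be separated by a compact open, hence clopen, set.\<close>

lemma totally_disconnected_if_compact_open_base:
  assumes Hs: "Hausdorff_space X"
    and base: "neighbourhood_base_of (\<lambda>U. openin X U \<and> compactin X U) X"
  shows "totally_disconnected_space X"
  unfolding totally_disconnected_space_def
proof (intro allI impI)
  fix S assume S: "S \<subseteq> topspace X \<and> connectedin X S"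
  have "b = a" if a: "a \<in> S" and b: "b \<in> S" for a b
  proof (rule ccontr)
    assume "b \<noteq> a"
    moreover have "openin X (topspace X - {b})"
      using closedin_Hausdorff_singleton[OF Hs] S b by blast
    ultimately obtain U where U: "openin X U" "compactin X U" "a \<in> U" "U \<subseteq> topspace X - {b}"
      using base S a unfolding neighbourhood_base_of_compact_open by blast
    then have "S \<subseteq> U \<or> disjnt S U"
      using connectedin_clopen_cases S compactin_imp_closedin[OF Hs] by blast
    then show False
      using U a b by (auto simp: disjnt_def)
  qed
  then show "\<exists>a. S \<subseteq> {a}"
    by blast
qed

lemma totally_disconnected_locally_compact_iff_compact_open_base:
  assumes "Hausdorff_space X"
  shows "totally_disconnected_space X \<and> locally_compact_space X \<longleftrightarrow>
         neighbourhood_base_of (\<lambda>U. openin X U \<and> compactin X U) X"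
  using assms compact_open_base_if_totally_disconnected_locally_compact
    locally_compact_if_compact_open_base totally_disconnected_if_compact_open_base by blast

lemma restrict_map_in_sym_pseudogroup:
  assumes f: "f \<in> sym_pseudogroup X" and V: "openin X V"
  shows "f |` V \<in> sym_pseudogroup X"
proof -
  define h where "h = (\<lambda>x. the (f x))"
  define S where "S = dom f \<inter> V"
  have dom_open: "openin X (dom f)" and ran_open: "openin X (ran f)"
    and hom: "homeomorphic_map (subtopology X (dom f)) (subtopology X (ran f)) h"
    using f by (auto simp: sym_pseudogroup_def h_def)
  have dom_f: "topspace (subtopology X (dom f)) = dom f"
    and ran_f: "topspace (subtopology X (ran f)) = ran f"
    using dom_open ran_open openin_subset by auto
  have ran_restrict: "ran (f |` V) = h ` S"
    by (force simp: S_def h_def ran_def restrict_map_def)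
  have "h ` S \<subseteq> ran f"
    by (auto simp: S_def h_def ran_def)
  then have hom_S: "homeomorphic_map (subtopology X S) (subtopology X (h ` S)) h"
    using homeomorphic_map_subtopologies[OF hom, of S "h ` S"] dom_f ran_f
    by (simp add: subtopology_subtopology S_def Int_absorb1 inf.absorb2)
  have S_open: "openin X S"
    using dom_open V by (simp add: S_def openin_Int)
  then have "openin (subtopology X (dom f)) S"
    using dom_open by (simp add: openin_open_subtopology S_def)
  then have "openin (subtopology X (ran f)) (h ` S)"
    using homeomorphic_map_openness[OF hom, of S] dom_f by (auto simp: S_def)
  then have "openin X (h ` S)"
    using ran_open openin_trans_full by blast
  moreover have "homeomorphic_map (subtopology X S) (subtopology X (h ` S)) (\<lambda>x. the ((f |` V) x))"
    by (rule homeomorphic_map_eq[OF hom_S]) (auto simp: S_def h_def)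
  ultimately show ?thesis
    using S_open ran_restrict by (simp add: sym_pseudogroup_def S_def)
qed

lemma identity_map_in_sym_pseudogroup:
  assumes "openin X W"
  shows "Some |` W \<in> sym_pseudogroup X"
proof -
  have "ran (Some |` W) = W"
    by (auto simp: ran_def restrict_map_def)
  moreover have "homeomorphic_map (subtopology X W) (subtopology X W) (\<lambda>x. the ((Some |` W) x))"
    by (rule homeomorphic_map_eq[of _ _ id]) auto
  ultimately show ?thesis
    using assms by (simp add: sym_pseudogroup_def)
qed

lemma is_sup_in_restrictions:
  assumes f: "f \<in> sym_pseudogroup X" and cover: "dom f \<subseteq> \<Union>\<V>"
  shows "is_sup_in (sym_pseudogroup X) pg_le ((\<lambda>V. f |` V) ` \<V>) f"
  unfolding is_sup_in_def pg_le_def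
proof (intro conjI ballI impI)
  fix u assume "\<forall>d\<in>(\<lambda>V. f |` V) ` \<V>. d \<subseteq>\<^sub>m u"
  then show "f \<subseteq>\<^sub>m u"
    using cover by (intro map_le_if_locally_map_le) blast
qed (use f restrict_map_map_le in auto)

lemma directed_in_restrictions:
  assumes f: "f \<in> sym_pseudogroup X" and open_\<V>: "\<And>V. V \<in> \<V> \<Longrightarrow> openin X V"
    and "\<V> \<noteq> {}" and Un: "\<And>V W. V \<in> \<V> \<Longrightarrow> W \<in> \<V> \<Longrightarrow> V \<union> W \<in> \<V>"
  shows "directed_in (sym_pseudogroup X) pg_le ((\<lambda>V. f |` V) ` \<V>)"
  unfolding directed_in_def pg_le_def
proof (intro conjI ballI)
  fix a b assume "a \<in> (\<lambda>V. f |` V) ` \<V>" "b \<in> (\<lambda>V. f |` V) ` \<V>"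
  then obtain V W where "V \<in> \<V>" "W \<in> \<V>" "a = f |` V" "b = f |` W"
    by blast
  then show "\<exists>c\<in>(\<lambda>V. f |` V) ` \<V>. a \<subseteq>\<^sub>m c \<and> b \<subseteq>\<^sub>m c"
    using Un by (intro bexI[of _ "f |` (V \<union> W)"]) (auto intro: restrict_map_mono)
qed (use assms in \<open>auto intro: restrict_map_in_sym_pseudogroup\<close>)

text \<open>In a Hausdorff space the supremum of D cannot be defined at a point x outside the domains
  of all elements of D: its restriction to the open set X - {x} would be a smaller upper bound.\<close>

lemma dom_sup_subset_Union_dom:
  assumes Hs: "Hausdorff_space X" and sup: "is_sup_in (sym_pseudogroup X) pg_le D s"
  shows "dom s \<subseteq> \<Union>(dom ` D)"
proof
  fix x assume x: "x \<in> dom s"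
  show "x \<in> \<Union>(dom ` D)"
  proof (rule ccontr)
    assume x_notin: "x \<notin> \<Union>(dom ` D)"
    have s: "s \<in> sym_pseudogroup X" and below: "\<And>d. d \<in> D \<Longrightarrow> d \<subseteq>\<^sub>m s"
      using sup by (auto simp: is_sup_in_def pg_le_def)
    have dom_s: "dom s \<subseteq> topspace X"
      using s openin_subset by (force simp: sym_pseudogroup_def)
    then have "openin X (topspace X - {x})"
      using closedin_Hausdorff_singleton[OF Hs] x by blast
    then have "s |` (topspace X - {x}) \<in> sym_pseudogroup X"
      using s restrict_map_in_sym_pseudogroup by blast
    moreover have "d \<subseteq>\<^sub>m s |` (topspace X - {x})" if "d \<in> D" for d
    proof -
      have "dom d \<subseteq> topspace X - {x}"
        using map_le_implies_dom_le[OF below[OF that]] dom_s x_notin that by blast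
      then show ?thesis
        using below[OF that] by (rule map_le_restrict_map[rotated])
    qed
    ultimately have "s \<subseteq>\<^sub>m s |` (topspace X - {x})"
      using sup by (simp add: is_sup_in_def pg_le_def)
    then have "x \<in> dom (s |` (topspace X - {x}))"
      using x map_le_implies_dom_le by blast
    then show False
      by simp
  qed
qed

text \<open>The restrictions of k to finite unions from an open cover form a directed family with
  supremum k, so compactness of k picks out a finite subcover.\<close>

lemma compactin_dom_if_compact_elem_in:
  assumes k: "k \<in> sym_pseudogroup X" and compact: "compact_elem_in (sym_pseudogroup X) pg_le k"
  shows "compactin X (dom k)"
  unfolding compactin_def
proof (intro conjI allI impI)
  show "dom k \<subseteq> topspace X"
    using k by (simp add: sym_pseudogroup_def openin_subset)
  fix \<U> assume \<U>: "(\<forall>U\<in>\<U>. openin X U) \<and> dom k \<subseteq> \<Union>\<U>"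
  define \<V> where "\<V> = {\<Union>\<F> | \<F>. finite \<F> \<and> \<F> \<subseteq> \<U>}"
  have open_\<V>: "openin X V" if "V \<in> \<V>" for V
    using that \<U> by (auto simp: \<V>_def intro!: openin_Union)
  have "\<U> \<subseteq> \<V>"
    by (auto simp: \<V>_def intro!: exI[of _ "{_}"])
  then have "is_sup_in (sym_pseudogroup X) pg_le ((\<lambda>V. k |` V) ` \<V>) k"
    using \<U> by (intro is_sup_in_restrictions[OF k]) blast+
  moreover have "directed_in (sym_pseudogroup X) pg_le ((\<lambda>V. k |` V) ` \<V>)"
  proof (rule directed_in_restrictions[OF k open_\<V>])
    show "\<V> \<noteq> {}"
      by (auto simp: \<V>_def)
    fix V W assume "V \<in> \<V>" "W \<in> \<V>"
    then obtain \<F> \<G> where "V = \<Union>\<F>" "W = \<Union>\<G>" "finite \<F>" "finite \<G>" "\<F> \<subseteq> \<U>" "\<G> \<subseteq> \<U>"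
      by (auto simp: \<V>_def)
    then show "V \<union> W \<in> \<V>"
      unfolding \<V>_def by (intro CollectI exI[of _ "\<F> \<union> \<G>"]) auto
  qed
  ultimately have "\<exists>d\<in>(\<lambda>V. k |` V) ` \<V>. pg_le k d"
    using compact map_le_refl unfolding compact_elem_in_def way_below_in_def pg_le_def by blast
  then obtain V where "V \<in> \<V>" "k \<subseteq>\<^sub>m k |` V"
    by (auto simp: pg_le_def)
  then show "\<exists>\<F>. finite \<F> \<and> \<F> \<subseteq> \<U> \<and> dom k \<subseteq> \<Union>\<F>"
    by (auto simp: \<V>_def dest!: map_le_implies_dom_le)
qed

lemma compact_elem_in_if_compactin_dom:
  assumes Hs: "Hausdorff_space X" and compact: "compactin X (dom k)"
  shows "compact_elem_in (sym_pseudogroup X) pg_le k"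
  unfolding compact_elem_in_def way_below_in_def
proof (intro allI impI)
  fix D s assume "directed_in (sym_pseudogroup X) pg_le D \<and>
     is_sup_in (sym_pseudogroup X) pg_le D s \<and> pg_le k s"
  then have dir: "directed_in (sym_pseudogroup X) pg_le D"
    and sup: "is_sup_in (sym_pseudogroup X) pg_le D s" and ks: "k \<subseteq>\<^sub>m s"
    by (simp_all add: pg_le_def)
  have "dom k \<subseteq> \<Union>(dom ` D)"
    using map_le_implies_dom_le[OF ks] dom_sup_subset_Union_dom[OF Hs sup] by blast
  moreover have "\<forall>U\<in>dom ` D. openin X U"
    using dir by (auto simp: directed_in_def sym_pseudogroup_def)
  ultimately obtain \<F> where "finite \<F>" "\<F> \<subseteq> dom ` D" "dom k \<subseteq> \<Union>\<F>"
    using compact unfolding compactin_def by meson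
  then obtain G where G: "finite G" "G \<subseteq> D" "dom k \<subseteq> \<Union>(dom ` G)"
    by (metis finite_subset_image)
  then obtain c where c: "c \<in> D" "\<forall>g\<in>G. g \<subseteq>\<^sub>m c"
    using directed_in_finite_upper_bound[OF dir] map_le_trans unfolding pg_le_def by metis
  then have "dom k \<subseteq> dom c"
    using G(3) map_le_implies_dom_le by blast
  moreover have "c \<subseteq>\<^sub>m s"
    using sup c(1) by (simp add: is_sup_in_def pg_le_def)
  ultimately have "k \<subseteq>\<^sub>m c"
    using ks map_le_if_common_extension by blast
  then show "\<exists>d\<in>D. pg_le k d"
    using c(1) by (auto simp: pg_le_def)
qed

lemma compact_elem_in_sym_pseudogroup_iff:
  assumes "Hausdorff_space X" and "k \<in> sym_pseudogroup X"
  shows "compact_elem_in (sym_pseudogroup X) pg_le k \<longleftrightarrow> compactin X (dom k)"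
  using assms compactin_dom_if_compact_elem_in compact_elem_in_if_compactin_dom by blast

lemma compact_elems_below_eq_restrictions:
  assumes Hs: "Hausdorff_space X" and f: "f \<in> sym_pseudogroup X"
  shows "{k \<in> sym_pseudogroup X. compact_elem_in (sym_pseudogroup X) pg_le k \<and> pg_le k f} =
         (\<lambda>V. f |` V) ` {V. openin X V \<and> compactin X V \<and> V \<subseteq> dom f}"
    (is "?K = _ ` ?\<V>")
proof
  show "?K \<subseteq> (\<lambda>V. f |` V) ` ?\<V>"
  proof
    fix k assume k: "k \<in> ?K"
    then have "k \<subseteq>\<^sub>m f"
      by (simp add: pg_le_def)
    then have "k = f |` dom k" "dom k \<subseteq> dom f"
      using map_le_iff_eq_restrict_map map_le_implies_dom_le by blast+
    moreover have "openin X (dom k)" "compactin X (dom k)"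
      using k compact_elem_in_sym_pseudogroup_iff[OF Hs] by (auto simp: sym_pseudogroup_def)
    ultimately show "k \<in> (\<lambda>V. f |` V) ` ?\<V>"
      by blast
  qed
  show "(\<lambda>V. f |` V) ` ?\<V> \<subseteq> ?K"
  proof
    fix k assume "k \<in> (\<lambda>V. f |` V) ` ?\<V>"
    then obtain V where V: "openin X V" "compactin X V" "V \<subseteq> dom f" and k: "k = f |` V"
      by blast
    have "k \<in> sym_pseudogroup X"
      using k V f restrict_map_in_sym_pseudogroup by blast
    moreover have "dom k = V"
      using k V by auto
    ultimately show "k \<in> ?K"
      using k V compact_elem_in_sym_pseudogroup_iff[OF Hs] restrict_map_map_le
      by (auto simp: pg_le_def)
  qed
qed

lemma algebraic_if_compact_open_base:
  assumes Hs: "Hausdorff_space X"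
    and base: "neighbourhood_base_of (\<lambda>U. openin X U \<and> compactin X U) X"
  shows "algebraic_in (sym_pseudogroup X) pg_le"
  unfolding algebraic_in_def
proof (intro ballI conjI)
  fix f assume f: "f \<in> sym_pseudogroup X"
  define \<V> where "\<V> = {V. openin X V \<and> compactin X V \<and> V \<subseteq> dom f}"
  have K_eq: "{k \<in> sym_pseudogroup X. compact_elem_in (sym_pseudogroup X) pg_le k \<and> pg_le k f} =
      (\<lambda>V. f |` V) ` \<V>"
    unfolding \<V>_def by (rule compact_elems_below_eq_restrictions[OF Hs f])
  have open_\<V>: "\<And>V. V \<in> \<V> \<Longrightarrow> openin X V"
    by (simp add: \<V>_def)
  have "openin X (dom f)"
    using f by (simp add: sym_pseudogroup_def)
  then have "dom f \<subseteq> \<Union>\<V>"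
    using base unfolding neighbourhood_base_of_compact_open \<V>_def by blast
  then show "is_sup_in (sym_pseudogroup X) pg_le
      {k \<in> sym_pseudogroup X. compact_elem_in (sym_pseudogroup X) pg_le k \<and> pg_le k f} f"
    unfolding K_eq by (rule is_sup_in_restrictions[OF f])
  show "directed_in (sym_pseudogroup X) pg_le
      {k \<in> sym_pseudogroup X. compact_elem_in (sym_pseudogroup X) pg_le k \<and> pg_le k f}"
    unfolding K_eq
    by (rule directed_in_restrictions[OF f open_\<V>])
      (auto simp: \<V>_def intro!: exI[of _ "{}"] compactin_Un openin_Un)
qed

text \<open>Apply algebraicity to the identity map of an open set W: its supremum property makes the
  domains of the compact elements below it, which are compact open subsets of W, cover W.\<close>

lemma compact_open_base_if_algebraic:
  assumes Hs: "Hausdorff_space X" and alg: "algebraic_in (sym_pseudogroup X) pg_le"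
  shows "neighbourhood_base_of (\<lambda>U. openin X U \<and> compactin X U) X"
  unfolding neighbourhood_base_of_compact_open
proof (intro allI impI)
  fix W x assume "openin X W \<and> x \<in> W"
  then have W: "openin X W" and x: "x \<in> dom (Some |` W)"
    by auto
  let ?K = "{k \<in> sym_pseudogroup X.
    compact_elem_in (sym_pseudogroup X) pg_le k \<and> pg_le k (Some |` W)}"
  have "is_sup_in (sym_pseudogroup X) pg_le ?K (Some |` W)"
    using alg identity_map_in_sym_pseudogroup[OF W] by (simp add: algebraic_in_def)
  then obtain k where k: "k \<in> ?K" "x \<in> dom k"
    using dom_sup_subset_Union_dom[OF Hs] x by blast
  then have "dom k \<subseteq> W"
    using map_le_implies_dom_le by (fastforce simp: pg_le_def)
  moreover have "openin X (dom k)" "compactin X (dom k)"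
    using k compact_elem_in_sym_pseudogroup_iff[OF Hs] by (auto simp: sym_pseudogroup_def)
  ultimately show "\<exists>U. openin X U \<and> compactin X U \<and> x \<in> U \<and> U \<subseteq> W"
    using k(2) by blast
qed

theorem corollary5p12:
  fixes X :: "'a topology"
  assumes "Hausdorff_space X"
  shows "(totally_disconnected_space X \<and> locally_compact_space X) \<longleftrightarrow>
         algebraic_in (sym_pseudogroup X) pg_le"
  using totally_disconnected_locally_compact_iff_compact_open_base[OF assms]
    algebraic_if_compact_open_base[OF assms] compact_open_base_if_algebraic[OF assms]
  by blast

end
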